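(* Fix $0\le j<n$ and the sequence $(\mu^k)_{k\ge 0}$ of $\lambda^{j^*}$-building functions. For every transition $\mathbf e\in\mathcal E_{\ge j}$, every $i\in[n]$ and every $k>0$, we have $\mu^k_i(\mathbf e)\le\mu^{k-1}_i(\mathbf e)$.
   Context: Dynamic NCG $(\mathcal A,n)$: arena $\mathcal A=(V,E,\mathsf{src},\mathsf{tgt})$, $V$ finite, $E$ a partial function from $V\times V$ to non-decreasing piecewise-affine functions $\mathbb N\to\mathbb N$ (edge $e$ has cost $\ell_e$); $\mathsf{tgt}$ has only a self-loop of cost $0$ and is reachable from all states; players $[n]$. Configurations are maps $c:[n]\to V$, $c_{\mathsf{tgt}}$ maps everyone to $\mathsf{tgt}$. From $c$, a move vector $(e_i)_i$ ($e_i$ an edge leaving $c(i)$) gives the transition $(c,w,c')$ with $c'(i)$ the target of $e_i$ and $w(i)=\ell_{e_i}(u_i)$, $u_i=|\{j: e_j=e_i\}|$; write $c\Rightarrow c'$, $\mathrm{cost}_i(c,c')=w(i)$, and $T$ for the set of transitions. For a path $\rho=(t_k)_{k\ge1}$ of consecutive transitions, $\rho_{\ge k}$ is its suffix starting with $t_k$ and $\mathrm{cost}_i(\rho)$ is player $i$'s total payment. $\mathrm{dev}_i(c,c')=\{c''\mid c\Rightarrow c'',\ c''(l)=c'(l)\ \forall l\neq i\}$. Let $X_m$ be the set of configurations with exactly $m$ players at $\mathsf{tgt}$, $X_{\ge m}=\bigcup_{m'\ge m}X_{m'}$, $\mathcal E_m=\{(c,w,c')\in T: c\in X_m\}$, $\mathcal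 E_{\ge m}=\{(c,w,c')\in T: c\in X_{\ge m}\}$. For a family $\lambda=(\lambda_i)_{i\in[n]}$ with $\lambda_i:\mathcal E_{\ge m}\to\mathbb N\cup\{\pm\infty\}$ and $c\in X_{\ge m}$, a path $\rho=(t_k)$ from $c$ visiting $c_{\mathsf{tgt}}$ is $\lambda$-consistent if $\mathrm{cost}_i(\rho_{\ge k})\le\lambda_i(t_k)$ for all $i$ and all $k$; $\Lambda_\lambda(c)$ is the set of such paths. Define $\lambda^{n^*}_i(c_{\mathsf{tgt}},0^n,c_{\mathsf{tgt}})=0$. For $j<n$, given $\lambda^{(j+1)^*}$, the $\lambda^{j^*}$-building functions $\mu^k_i:\mathcal E_{\ge j}\to\mathbb N\cup\{\pm\infty\}$ are: $\mu^k_i(\mathbf e)=\lambda^{(j+1)^*}_i(\mathbf e)$ for $\mathbf e\in\mathcal E_{\ge j+1}$; for $\mathbf e=(c,w,c')\in\mathcal E_j$: $\mu^0_i(\mathbf e)=0$ if $c(i)=\mathsf{tgt}$ and $+\infty$ otherwise; for $k>0$, $\mu^k_i(\mathbf e)=0$ if $c(i)=\mathsf{tgt}$, and otherwise $\mu^k_i(\mathbf e)=\min_{c''\in\mathrm{dev}_i(c,c')}\sup_{\rho\in\Lambda_{\mu^{k-1}}(c'')}(\mathrm{cost}_i(c,c'')+\mathrm{cost}_i(\rho))$ if $\Lambda_{\mu^{k-1}}(\tilde c)\neq\emptyset$ for every $(c,\tilde w,\tilde c)\in T$, and $-\infty$ otherwise. $\lambda^{j^*}$ is the pointwise limit of $(\mu^k)_k$.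 *)

theory Defs
  imports Complex_Main "HOL-Library.Extended_Real"
begin

(* Players are 0,...,n-1 (the paper's [n]).
   Edges are identified with pairs (u,v) with E u v = Some l (E is a partial
   function V x V -> (nat => nat)). *)

type_synonym 'v conf = "'v list"
type_synonym 'v trans = "'v list \<times> nat list \<times> 'v list"

definition affine_on :: "nat set \<Rightarrow> (nat \<Rightarrow> nat) \<Rightarrow> bool" where
  "affine_on I f \<longleftrightarrow> (\<exists>a b :: real. \<forall>x\<in>I. real (f x) = a * real x + b)"

definition piecewise_affine :: "(nat \<Rightarrow> nat) \<Rightarrow> bool" where
  "piecewise_affine f \<longleftrightarrow>
     (\<exists>S :: nat set set. finite S \<and> \<Union>S = UNIV \<and>
        (\<forall>I\<in>S. (\<exists>l u. I = {l..<u} \<or> I = {l..}) \<and> affine_on I f))"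

definition arena_wf ::
  "'v set \<Rightarrow> ('v \<Rightarrow> 'v \<Rightarrow> (nat \<Rightarrow> nat) option) \<Rightarrow> 'v \<Rightarrow> 'v \<Rightarrow> bool" where
  "arena_wf V E src tgt \<longleftrightarrow>
     finite V \<and> src \<in> V \<and> tgt \<in> V \<and>
     (\<forall>u v l. E u v = Some l \<longrightarrow> u \<in> V \<and> v \<in> V \<and> mono l \<and> piecewise_affine l) \<and>
     (\<forall>v. E tgt v \<noteq> None \<longleftrightarrow> v = tgt) \<and> E tgt tgt = Some (\<lambda>_. 0) \<and>
     (\<forall>v\<in>V. (v, tgt) \<in> {(u, w). E u w \<noteq> None}\<^sup>*)"

definition is_conf :: "'v set \<Rightarrow> nat \<Rightarrow> 'v conf \<Rightarrow> bool" where
  "is_conf V n c \<longleftrightarrow> length c = n \<and> set c \<subseteq> V"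

definition c_tgt :: "nat \<Rightarrow> 'v \<Rightarrow> 'v conf" where
  "c_tgt n tgt = replicate n tgt"

(* cost paid by player i when going from c to c' (the move vector is
   determined by c and c', since edges are pairs of vertices) *)
definition step_cost ::
  "('v \<Rightarrow> 'v \<Rightarrow> (nat \<Rightarrow> nat) option) \<Rightarrow> nat \<Rightarrow> 'v conf \<Rightarrow> 'v conf \<Rightarrow> nat \<Rightarrow> nat" where
  "step_cost E n c c' i =
     the (E (c ! i) (c' ! i)) (card {l. l < n \<and> c ! l = c ! i \<and> c' ! l = c' ! i})"

definition is_trans ::
  "'v set \<Rightarrow> ('v \<Rightarrow> 'v \<Rightarrow> (nat \<Rightarrow> nat) option) \<Rightarrow> nat \<Rightarrow> 'v trans \<Rightarrow> bool" where
  "is_trans V E n t \<longleftrightarrow> (case t of (c, w, c') \<Rightarrow>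
     is_conf V n c \<and> is_conf V n c' \<and> (\<forall>i<n. E (c ! i) (c' ! i) \<noteq> None) \<and>
     w = map (step_cost E n c c') [0..<n])"

definition steps ::
  "'v set \<Rightarrow> ('v \<Rightarrow> 'v \<Rightarrow> (nat \<Rightarrow> nat) option) \<Rightarrow> nat \<Rightarrow> 'v conf \<Rightarrow> 'v conf \<Rightarrow> bool" where
  "steps V E n c c' \<longleftrightarrow> (\<exists>w. is_trans V E n (c, w, c'))"

definition dev ::
  "'v set \<Rightarrow> ('v \<Rightarrow> 'v \<Rightarrow> (nat \<Rightarrow> nat) option) \<Rightarrow> nat \<Rightarrow> nat \<Rightarrow> 'v conf \<Rightarrow> 'v conf \<Rightarrow> 'v conf set" where
  "dev V E n i c c' = {c''. steps V E n c c'' \<and> (\<forall>l<n. l \<noteq> i \<longrightarrow> c'' ! l = c' ! l)}"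

definition num_tgt :: "nat \<Rightarrow> 'v \<Rightarrow> 'v conf \<Rightarrow> nat" where
  "num_tgt n tgt c = card {i. i < n \<and> c ! i = tgt}"

definition trans_ge ::
  "'v set \<Rightarrow> ('v \<Rightarrow> 'v \<Rightarrow> (nat \<Rightarrow> nat) option) \<Rightarrow> nat \<Rightarrow> 'v \<Rightarrow> nat \<Rightarrow> 'v trans set" where
  "trans_ge V E n tgt m = {t. is_trans V E n t \<and> num_tgt n tgt (fst t) \<ge> m}"

(* Paths are indexed from 0 (the paper indexes from 1). *)
definition is_path ::
  "'v set \<Rightarrow> ('v \<Rightarrow> 'v \<Rightarrow> (nat \<Rightarrow> nat) option) \<Rightarrow> nat \<Rightarrow> (nat \<Rightarrow> 'v trans) \<Rightarrow> bool" where
  "is_path V E n \<rho> \<longleftrightarrow>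
     (\<forall>k. is_trans V E n (\<rho> k)) \<and> (\<forall>k. snd (snd (\<rho> k)) = fst (\<rho> (Suc k)))"

definition suffix :: "(nat \<Rightarrow> 'v trans) \<Rightarrow> nat \<Rightarrow> (nat \<Rightarrow> 'v trans)" where
  "suffix \<rho> k = (\<lambda>m. \<rho> (m + k))"

definition path_cost :: "nat \<Rightarrow> (nat \<Rightarrow> 'v trans) \<Rightarrow> ereal" where
  "path_cost i \<rho> = (\<Sum>m. ereal (real (fst (snd (\<rho> m)) ! i)))"

definition consistent_paths ::
  "'v set \<Rightarrow> ('v \<Rightarrow> 'v \<Rightarrow> (nat \<Rightarrow> nat) option) \<Rightarrow> nat \<Rightarrow> 'v
   \<Rightarrow> (nat \<Rightarrow> 'v trans \<Rightarrow> ereal) \<Rightarrow> 'v conf \<Rightarrow> (nat \<Rightarrow> 'v trans) set" where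
  "consistent_paths V E n tgt lam c =
     {\<rho>. is_path V E n \<rho> \<and> fst (\<rho> 0) = c \<and> (\<exists>k. fst (\<rho> k) = c_tgt n tgt) \<and>
          (\<forall>i<n. \<forall>k. path_cost i (suffix \<rho> k) \<le> lam i (\<rho> k))}"

fun mu ::
  "'v set \<Rightarrow> ('v \<Rightarrow> 'v \<Rightarrow> (nat \<Rightarrow> nat) option) \<Rightarrow> nat \<Rightarrow> 'v \<Rightarrow> nat
   \<Rightarrow> (nat \<Rightarrow> 'v trans \<Rightarrow> ereal) \<Rightarrow> nat \<Rightarrow> nat \<Rightarrow> 'v trans \<Rightarrow> ereal" where
  "mu V E n tgt j lamnext 0 i e =
     (if e \<in> trans_ge V E n tgt (Suc j) then lamnext i e
      else if fst e ! i = tgt then 0 else \<infinity>)"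
| "mu V E n tgt j lamnext (Suc k) i e =
     (if e \<in> trans_ge V E n tgt (Suc j) then lamnext i e
      else if fst e ! i = tgt then 0
      else if (\<forall>t. is_trans V E n t \<and> fst t = fst e \<longrightarrow>
                 consistent_paths V E n tgt (mu V E n tgt j lamnext k) (snd (snd t)) \<noteq> {})
      then (INF c''\<in>dev V E n i (fst e) (snd (snd e)).
              SUP \<rho>\<in>consistent_paths V E n tgt (mu V E n tgt j lamnext k) c''.
                ereal (real (step_cost E n (fst e) c'' i)) + path_cost i \<rho>)
      else -\<infinity>)"

fun lam_star_aux ::
  "'v set \<Rightarrow> ('v \<Rightarrow> 'v \<Rightarrow> (nat \<Rightarrow> nat) option) \<Rightarrow> nat \<Rightarrow> 'v \<Rightarrow> nat
   \<Rightarrow> nat \<Rightarrow> 'v trans \<Rightarrow> ereal" where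
  "lam_star_aux V E n tgt 0 =
     (\<lambda>i e. if e = (c_tgt n tgt, replicate n 0, c_tgt n tgt) then 0 else undefined)"
| "lam_star_aux V E n tgt (Suc d) =
     (\<lambda>i e. lim (\<lambda>k. mu V E n tgt (n - Suc d) (lam_star_aux V E n tgt d) k i e))"

definition lam_star ::
  "'v set \<Rightarrow> ('v \<Rightarrow> 'v \<Rightarrow> (nat \<Rightarrow> nat) option) \<Rightarrow> nat \<Rightarrow> 'v \<Rightarrow> nat
   \<Rightarrow> nat \<Rightarrow> 'v trans \<Rightarrow> ereal" where
  "lam_star V E n tgt j = lam_star_aux V E n tgt (n - j)"

definition building ::
  "'v set \<Rightarrow> ('v \<Rightarrow> 'v \<Rightarrow> (nat \<Rightarrow> nat) option) \<Rightarrow> nat \<Rightarrow> 'v \<Rightarrow> nat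
   \<Rightarrow> nat \<Rightarrow> nat \<Rightarrow> 'v trans \<Rightarrow> ereal" where
  "building V E n tgt j k = mu V E n tgt j (lam_star V E n tgt (Suc j)) k"

end

theory Submission
  imports Defs
begin

(* \<mu>^{k+1} is obtained from \<mu>^k by a monotone operator, since a larger bound
   admits more consistent paths, which weakens the non-emptiness test and enlarges every
   supremum.  As \<mu>^1 \<le> \<mu>^0 (where \<mu>^0 is 0 or +\<infinity>), induction on k gives \<mu>^{k+1} \<le> \<mu>^k. *)

lemma consistent_paths_mono:
  assumes "\<And>i e. lam i e \<le> lam' i e"
  shows "consistent_paths V E n tgt lam c \<subseteq> consistent_paths V E n tgt lam' c"
  unfolding consistent_paths_def using assms order_trans by blast

lemma mu_Suc_mono:
  assumes le: "\<And>i e. mu V E n tgt j L k i e \<le> mu V E n tgt j L k' i e"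
  shows "mu V E n tgt j L (Suc k) i e \<le> mu V E n tgt j L (Suc k') i e"
proof -
  have sub: "\<And>c. consistent_paths V E n tgt (mu V E n tgt j L k) c
      \<subseteq> consistent_paths V E n tgt (mu V E n tgt j L k') c"
    using le by (rule consistent_paths_mono)
  then have "consistent_paths V E n tgt (mu V E n tgt j L k) c \<noteq> {}
      \<Longrightarrow> consistent_paths V E n tgt (mu V E n tgt j L k') c \<noteq> {}" for c
    by blast
  then show ?thesis
    unfolding mu.simps(2)
    using sub by (auto simp del: mu.simps intro!: INF_mono' SUP_subset_mono)
qed

lemma mu_Suc_le: "mu V E n tgt j L (Suc k) i e \<le> mu V E n tgt j L k i e"
proof (induction k arbitrary: i e)
  case 0
  show ?case by simp
next
  case (Suc k)
  then show ?case by (rule mu_Suc_mono)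
qed

lemma mu_decseq: "decseq (\<lambda>k. mu V E n tgt j L k i e)"
  by (rule decseq_SucI) (rule mu_Suc_le)

theorem lemmaC4:
  fixes V :: "'v set" and E :: "'v \<Rightarrow> 'v \<Rightarrow> (nat \<Rightarrow> nat) option"
    and src tgt :: 'v and n j k i :: nat and e :: "'v trans"
  assumes "arena_wf V E src tgt"
    and "j < n"
    and "e \<in> trans_ge V E n tgt j"
    and "i < n"
    and "0 < k"
  shows "building V E n tgt j k i e \<le> building V E n tgt j (k - 1) i e"
  unfolding building_def using mu_decseq[THEN decseqD, of "k - 1" k] by simp

end
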